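(* Let $D$ be a period domain for polarized Hodge structures of weight $4$, $F\in D$, and $E\subset\mathfrak g^{-1,1}$ an integral element of the infinitesimal period relation at $F$ (i.e. an abelian subspace). Let $\zeta\in H_{\mathbb R}\cap H^{2,2}_F$, let $E_\zeta=\{\varphi\in E:\varphi(\zeta)=0\text{ in }H^{1,3}\}$, and let $$\sigma_\zeta=\dim\,\mathrm{Image}\{E_\zeta\otimes H^{4,0}\to H^{3,1},\ \varphi\otimes\omega\mapsto\varphi(\omega)\}.$$ Then $\mathrm{codim}_E E_\zeta\le h^{1,3}-\sigma_\zeta$.
   Context: $H$ is a finite-dimensional $\mathbb Q$-vector space with non-degenerate symmetric bilinear form $Q$; a polarized Hodge structure of weight 4 is $H_{\mathbb C}=\bigoplus_{p+q=4}H^{p,q}$, $\overline{H^{p,q}}=H^{q,p}$, $F^p=\bigoplus_{p'\ge p}H^{p',4-p'}$, $Q(F^p,F^{5-p})=0$, $Q(Cu,\bar u)>0$ for $u\neq 0$ ($C=i^{p-q}$ on $H^{p,q}$); $D$ is the period domain of such structures with fixed Hodge numbers $h^{p,q}$. $\mathfrak g$ is the Lie algebra of $\mathrm{Aut}(H,Q)$ and $\mathfrak g^{-1,1}=\{X\in\mathfrak g_{\mathbb C}:X(H^{p,q})\subset H^{p-1,q+1}\ \forall p,q\}$; it is the fibre at $F$ of the horizontal distribution whose annihilator $I$ is the infinitesimal period relation. Integral elements of $I$ at $F$ are the subspaces $E\subset\mathfrak g^{-1,1}$ with $[\varphi,\psi]=0$ for all $\varphi,\psi\in E$. $E_\zeta$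 is the intersection of $E$ with the tangent space at $F$ of the Noether–Lefschetz locus $D_\zeta=\{F'\in D:\zeta\in H^{2,2}_{F'}\}$. *)

theory Defs
  imports "HOL-Analysis.Analysis"
begin

text \<open>Concrete model. $H_{\mathbb C}$ = complex^'n (standard basis = a rational basis of $H$),
  $H = H_{\mathbb Q}$ = vectors with rational entries, $H_{\mathbb R}$ = vectors with real entries,
  complex conjugation = entrywise conjugation.\<close>

definition HQ :: "(complex^'n) set" where
  "HQ = {u. \<forall>i. u$i \<in> \<rat>}"

definition HR :: "(complex^'n) set" where
  "HR = {u. \<forall>i. u$i \<in> \<real>}"

definition cconj :: "complex^'n \<Rightarrow> complex^'n" where
  "cconj u = (\<chi> i. cnj (u$i))"

definition qf :: "complex^'n^'n \<Rightarrow> complex^'n \<Rightarrow> complex^'n \<Rightarrow> complex" where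
  "qf Qm u v = (\<Sum>i\<in>UNIV. \<Sum>j\<in>UNIV. u$i * Qm$i$j * v$j)"

definition rational_form :: "complex^'n^'n \<Rightarrow> bool" where
  "rational_form Qm \<longleftrightarrow> (\<forall>i j. Qm$i$j \<in> \<rat>) \<and> transpose Qm = Qm \<and>
     (\<forall>u\<in>HQ. (\<forall>v\<in>HQ. qf Qm u v = 0) \<longrightarrow> u = 0)"

text \<open>Hodge filtration: Hs p is H^{p,4-p}; F^p = sum of H^{p',4-p'} for p \<le> p' \<le> 4\<close>
definition Fil :: "(nat \<Rightarrow> (complex^'n) set) \<Rightarrow> nat \<Rightarrow> (complex^'n) set" where
  "Fil Hs p = {(\<Sum>p'\<in>{p..4}. w p') | w. \<forall>p'\<in>{p..4}. w p' \<in> Hs p'}"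

text \<open>polarized Hodge structure of weight 4 on (H,Q); the Weil operator C acts as
  i^(p-q) on H^{p,q}, written out on the (unique) Hodge decomposition of u\<close>
definition pol_hodge4 :: "complex^'n^'n \<Rightarrow> (nat \<Rightarrow> (complex^'n) set) \<Rightarrow> bool" where
  "pol_hodge4 Qm Hs \<longleftrightarrow>
     (\<forall>p\<le>4. vec.subspace (Hs p)) \<and>
     (\<forall>u. \<exists>w. (\<forall>p\<le>4. w p \<in> Hs p) \<and> u = (\<Sum>p\<le>4. w p)) \<and>
     (\<forall>w. (\<forall>p\<le>4. w p \<in> Hs p) \<and> (\<Sum>p\<le>4. w p) = 0 \<longrightarrow> (\<forall>p\<le>4. w p = 0)) \<and>
     (\<forall>p\<le>4. cconj ` Hs p = Hs (4 - p)) \<and>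
     (\<forall>p\<le>5. \<forall>u\<in>Fil Hs p. \<forall>v\<in>Fil Hs (5 - p). qf Qm u v = 0) \<and>
     (\<forall>w. (\<forall>p\<le>4. w p \<in> Hs p) \<and> (\<exists>p\<le>4. w p \<noteq> 0) \<longrightarrow>
        (let u = (\<Sum>p\<le>4. w p);
             Cu = (\<Sum>p\<le>4. (\<i> powi (int p - int (4 - p))) *s w p);
             z = qf Qm Cu (cconj u)
         in Im z = 0 \<and> Re z > 0))"

definition mscale :: "complex \<Rightarrow> complex^'n^'n \<Rightarrow> complex^'n^'n" where
  "mscale c A = (\<chi> i j. c * A$i$j)"

interpretation mat: vector_space "mscale :: complex \<Rightarrow> complex^'n^'n \<Rightarrow> complex^'n^'n"
  by unfold_locales (simp_all add: mscale_def vec_eq_iff algebra_simps)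

definition gC :: "complex^'n^'n \<Rightarrow> (complex^'n^'n) set" where
  "gC Qm = {X. \<forall>u v. qf Qm (X *v u) v + qf Qm u (X *v v) = 0}"

text \<open>g^{-1,1}: X(H^{p,q}) \<subseteq> H^{p-1,q+1}, with H^{-1,5} = 0\<close>
definition gm11 :: "complex^'n^'n \<Rightarrow> (nat \<Rightarrow> (complex^'n) set) \<Rightarrow> (complex^'n^'n) set" where
  "gm11 Qm Hs = {X \<in> gC Qm. \<forall>p\<le>4. \<forall>v\<in>Hs p. X *v v \<in> (if p = 0 then {0} else Hs (p - 1))}"

definition integral_element :: "complex^'n^'n \<Rightarrow> (nat \<Rightarrow> (complex^'n) set) \<Rightarrow> (complex^'n^'n) set \<Rightarrow> bool" where
  "integral_element Qm Hs E \<longleftrightarrow> mat.subspace E \<and> E \<subseteq> gm11 Qm Hs \<and>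
     (\<forall>\<phi>\<in>E. \<forall>\<psi>\<in>E. \<phi> ** \<psi> - \<psi> ** \<phi> = 0)"

definition E_zeta :: "(complex^'n^'n) set \<Rightarrow> complex^'n \<Rightarrow> (complex^'n^'n) set" where
  "E_zeta E \<zeta> = {\<phi> \<in> E. \<phi> *v \<zeta> = 0}"

text \<open>sigma_zeta = dim of the image of E_zeta \<otimes> H^{4,0} \<rightarrow> H^{3,1}, i.e. of the span of the \<phi>(\<omega>)\<close>
definition sigma_zeta :: "(nat \<Rightarrow> (complex^'n) set) \<Rightarrow> (complex^'n^'n) set \<Rightarrow> complex^'n \<Rightarrow> nat" where
  "sigma_zeta Hs E \<zeta> = vec.dim (vec.span {\<phi> *v \<omega> | \<phi> \<omega>. \<phi> \<in> E_zeta E \<zeta> \<and> \<omega> \<in> Hs 4})"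

end

theory Submission
  imports Defs
begin

text \<open>
  By rank--nullity for \<open>\<phi> \<mapsto> \<phi>(\<zeta>)\<close>, the codimension of \<open>E\<^sub>\<zeta>\<close> in \<open>E\<close> is at most
  \<open>dim V\<close>, where \<open>V = E(\<zeta>) \<subseteq> H\<^sup>1\<^sup>,\<^sup>3\<close>. For \<open>\<phi> \<in> E\<close>, \<open>\<psi> \<in> E\<^sub>\<zeta>\<close> and \<open>\<omega> \<in> H\<^sup>4\<^sup>,\<^sup>0\<close>, skewness of
  \<open>\<phi>, \<psi>\<close> with respect to \<open>Q\<close> and \<open>[\<phi>,\<psi>] = 0\<close> give \<open>Q(\<phi>\<zeta>, \<psi>\<omega>) = Q(\<psi>\<zeta>, \<phi>\<omega>) = 0\<close>, so \<open>V\<close> is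
  \<open>Q\<close>-orthogonal to the span \<open>S \<subseteq> H\<^sup>3\<^sup>,\<^sup>1\<close> of the \<open>\<psi>\<omega>\<close>. By the Hodge--Riemann relations
  \<open>Q(w, w\<^bsup>-\<^esup>) \<noteq> 0\<close> for \<open>0 \<noteq> w \<in> H\<^sup>3\<^sup>,\<^sup>1\<close>, so \<open>V\<close> meets \<open>S\<^bsup>-\<^esup> \<subseteq> H\<^sup>1\<^sup>,\<^sup>3\<close> trivially and
  \<open>dim V + \<sigma>\<^sub>\<zeta> \<le> h\<^sup>1\<^sup>,\<^sup>3\<close>.
\<close>

text \<open>Finite-dimensionality of the matrix space is transported from vectors indexed by pairs.\<close>

definition matrix_of_pair_vector :: "complex^('n::finite \<times> 'n) \<Rightarrow> complex^'n^'n" where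
  "matrix_of_pair_vector v = (\<chi> i j. v$(i,j))"

lemma linear_matrix_of_pair_vector:
  "Vector_Spaces.linear (*s) mscale (matrix_of_pair_vector :: complex^('n::finite \<times> 'n) \<Rightarrow> _)"
  unfolding Vector_Spaces.linear_iff
  by (auto simp: matrix_of_pair_vector_def mscale_def vec_eq_iff
      vec.vector_space_axioms mat.vector_space_axioms)

lemma bij_matrix_of_pair_vector: "bij matrix_of_pair_vector"
proof (rule bijI)
  show "inj matrix_of_pair_vector"
    unfolding inj_on_def matrix_of_pair_vector_def by (auto simp: vec_eq_iff)
  have "A = matrix_of_pair_vector (\<chi> p. A$fst p$snd p)" for A :: "complex^'n^'n"
    by (simp add: matrix_of_pair_vector_def vec_eq_iff)
  then show "surj matrix_of_pair_vector" by blast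
qed

interpretation pair_matrix: finite_dimensional_vector_space_pair_1
  "(*s) :: complex \<Rightarrow> complex^('n::finite \<times> 'n) \<Rightarrow> _" cart_basis
  "mscale :: complex \<Rightarrow> complex^'n^'n \<Rightarrow> _"
  by unfold_locales

interpretation mat_finite: finite_dimensional_vector_space "mscale :: complex \<Rightarrow> complex^'n^'n \<Rightarrow> _"
  "matrix_of_pair_vector ` cart_basis"
proof unfold_locales
  show "finite (matrix_of_pair_vector ` cart_basis)"
    using vec.finite_Basis by (rule finite_imageI)
  show "mat.independent (matrix_of_pair_vector ` cart_basis)"
    using pair_matrix.linear_independent_injective_image[OF linear_matrix_of_pair_vector
        vec.independent_Basis] bij_matrix_of_pair_vector
    by (meson bij_is_inj inj_on_subset subset_UNIV)
  show "mat.span (matrix_of_pair_vector ` cart_basis) = UNIV"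
    using pair_matrix.linear_span_image[OF linear_matrix_of_pair_vector, of cart_basis]
      vec.span_Basis bij_matrix_of_pair_vector
    by (metis bij_is_surj)
qed

interpretation matrix_vector: finite_dimensional_vector_space_pair
  "mscale :: complex \<Rightarrow> complex^'n::finite^'n \<Rightarrow> _" "matrix_of_pair_vector ` cart_basis"
  "(*s) :: complex \<Rightarrow> complex^'m::finite \<Rightarrow> _" cart_basis
  by unfold_locales

lemma linear_matrix_vector_mult_left:
  "Vector_Spaces.linear mscale (*s) (\<lambda>A :: complex^'n::finite^'n. A *v v)"
proof -
  have "mscale c A *v v = c *s (A *v v)" for c and A :: "complex^'n^'n"
    by (simp add: vec_eq_iff matrix_vector_mult_def mscale_def sum_distrib_left mult.assoc)
  then show ?thesis
    unfolding Vector_Spaces.linear_iff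
    by (simp add: matrix_vector_mult_add_rdistrib vec.vector_space_axioms mat.vector_space_axioms)
qed

context finite_dimensional_vector_space_pair
begin

lemma dim_le_dim_kernel_add_dim_image:
  assumes lin: "Vector_Spaces.linear s1 s2 f" and E: "vs1.subspace E"
  shows "vs1.dim E \<le> vs1.dim {x\<in>E. f x = 0} + vs2.dim (f ` E)"
proof -
  interpret lf: Vector_Spaces.linear s1 s2 f by (rule lin)
  define K where "K = {x\<in>E. f x = 0}"
  obtain BK where BK: "BK \<subseteq> K" "vs1.independent BK" "K \<subseteq> vs1.span BK" "card BK = vs1.dim K"
    by (rule vs1.basis_exists)
  obtain D where D: "D \<subseteq> f ` E" "vs2.independent D" "f ` E \<subseteq> vs2.span D"
      "card D = vs2.dim (f ` E)"
    by (rule vs2.basis_exists)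
  have "finite BK" using BK(2) by (rule vs1.finiteI_independent)
  have "finite D" using D(2) by (rule vs2.finiteI_independent)
  obtain P where P: "P \<subseteq> E" "f ` P = D" "finite P" "card P \<le> card D"
  proof -
    have "\<forall>y\<in>D. \<exists>x\<in>E. f x = y" using D(1) by blast
    then obtain p where p: "\<forall>y\<in>D. p y \<in> E \<and> f (p y) = y" by metis
    show ?thesis
    proof (rule that[of "p ` D"])
      show "p ` D \<subseteq> E" using p by blast
      show "f ` p ` D = D" using p by (force simp: image_image)
      show "finite (p ` D)" using \<open>finite D\<close> by (rule finite_imageI)
      show "card (p ` D) \<le> card D" using \<open>finite D\<close> by (rule card_image_le)
    qed
  qed
  have "E \<subseteq> vs1.span (BK \<union> P)"
  proof
    fix x assume x: "x \<in> E"
    have "f x \<in> vs2.span (f ` P)" using D(3) x P(2) by auto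
    then obtain z where z: "z \<in> vs1.span P" "f z = f x"
      using lf.span_image[of P] by auto
    have "z \<in> E" using z(1) vs1.span_minimal[OF P(1) E] by auto
    then have "x - z \<in> K" unfolding K_def using vs1.subspace_diff[OF E x] lf.diff z(2) by simp
    then have "x - z \<in> vs1.span (BK \<union> P)" using BK(3) vs1.span_mono[of BK "BK \<union> P"] by auto
    moreover have "z \<in> vs1.span (BK \<union> P)" using z(1) vs1.span_mono[of P "BK \<union> P"] by auto
    ultimately have "(x - z) + z \<in> vs1.span (BK \<union> P)" by (rule vs1.span_add)
    then show "x \<in> vs1.span (BK \<union> P)" by simp
  qed
  then have "vs1.dim E \<le> card (BK \<union> P)"
    using \<open>finite BK\<close> P(3) by (intro vs1.dim_le_card) auto
  also have "\<dots> \<le> card BK + card P" by (rule card_Un_le)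
  finally show ?thesis using BK(4) D(4) P(4) K_def by simp
qed

end

lemma cconj_add: "cconj (x + y) = cconj x + cconj y"
  by (simp add: cconj_def vec_eq_iff)

lemma cconj_scale: "cconj (c *s x) = cnj c *s cconj x"
  by (simp add: cconj_def vec_eq_iff)

lemma cconj_cconj [simp]: "cconj (cconj x) = x"
  by (simp add: cconj_def vec_eq_iff)

lemma cconj_zero [simp]: "cconj 0 = 0"
  by (simp add: cconj_def vec_eq_iff)

lemma cconj_eq_0_iff [simp]: "cconj x = 0 \<longleftrightarrow> x = 0"
  by (metis cconj_cconj cconj_zero)

lemma cconj_in_span_image: "x \<in> vec.span S \<Longrightarrow> cconj x \<in> vec.span (cconj ` S)"
proof (induction rule: vec.span_induct)
  case base
  show ?case
    by (auto simp: vec.subspace_def cconj_add cconj_scale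
        intro: vec.span_zero vec.span_add vec.span_scale)
next
  case (step x)
  then show ?case by (simp add: vec.span_base)
qed

lemma dim_cconj_image_le: "vec.dim (cconj ` X) \<le> vec.dim X"
proof -
  obtain B where B: "B \<subseteq> X" "vec.independent B" "X \<subseteq> vec.span B" "card B = vec.dim X"
    by (rule vec.basis_exists)
  have "finite B" using vec.finiteI_independent B(2) .
  have "cconj ` X \<subseteq> vec.span (cconj ` B)" using B(3) cconj_in_span_image by blast
  then have "vec.dim (cconj ` X) \<le> card (cconj ` B)" using vec.dim_le_card \<open>finite B\<close> by blast
  also have "\<dots> \<le> card B" using card_image_le \<open>finite B\<close> by blast
  finally show ?thesis using B(4) by simp
qed

lemma dim_cconj_image: "vec.dim (cconj ` X) = vec.dim X"
  using dim_cconj_image_le[of X] dim_cconj_image_le[of "cconj ` X"]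
  by (simp add: image_image)

lemma qf_add_right: "qf Qm x (a + b) = qf Qm x a + qf Qm x b"
  by (simp add: qf_def distrib_left sum.distrib)

lemma qf_scale_right: "qf Qm x (c *s b) = c * qf Qm x b"
  by (simp add: qf_def sum_distrib_left algebra_simps)

lemma qf_scale_left: "qf Qm (c *s a) y = c * qf Qm a y"
  by (simp add: qf_def sum_distrib_left algebra_simps)

lemma qf_zero_left [simp]: "qf Qm 0 y = 0"
  by (simp add: qf_def)

lemma qf_zero_right [simp]: "qf Qm x 0 = 0"
  by (simp add: qf_def)

lemma qf_commute:
  assumes "transpose Qm = Qm"
  shows "qf Qm u v = qf Qm v u"
proof -
  have sym: "Qm$i$j = Qm$j$i" for i j
    using arg_cong[OF assms, of "\<lambda>M. M$j$i"] by (simp add: transpose_def)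
  have "qf Qm u v = (\<Sum>j\<in>UNIV. \<Sum>i\<in>UNIV. u$i * Qm$i$j * v$j)"
    unfolding qf_def by (rule sum.swap)
  also have "\<dots> = qf Qm v u" unfolding qf_def
    by (intro sum.cong refl) (simp add: sym mult.commute mult.left_commute)
  finally show ?thesis .
qed

lemma subspace_qf_orthogonal: "vec.subspace {y. qf Qm x y = 0}"
  by (simp add: vec.subspace_def qf_add_right qf_scale_right)

lemma qf_swap_of_commuting_gC:
  assumes "\<phi> \<in> gC Qm" "\<psi> \<in> gC Qm" "\<phi> ** \<psi> = \<psi> ** \<phi>"
  shows "qf Qm (\<phi> *v u) (\<psi> *v v) = qf Qm (\<psi> *v u) (\<phi> *v v)"
proof -
  have \<phi>: "qf Qm (\<phi> *v u) (\<psi> *v v) + qf Qm u (\<phi> *v (\<psi> *v v)) = 0"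
    using assms(1) unfolding gC_def by blast
  have \<psi>: "qf Qm (\<psi> *v u) (\<phi> *v v) + qf Qm u (\<psi> *v (\<phi> *v v)) = 0"
    using assms(2) unfolding gC_def by blast
  have "qf Qm (\<phi> *v u) (\<psi> *v v) = - qf Qm u (\<phi> *v (\<psi> *v v))"
    using \<phi> by (simp only: eq_neg_iff_add_eq_0)
  also have "\<phi> *v (\<psi> *v v) = \<psi> *v (\<phi> *v v)"
    by (simp only: matrix_vector_mul_assoc assms(3))
  also have "- qf Qm u (\<psi> *v (\<phi> *v v)) = qf Qm (\<psi> *v u) (\<phi> *v v)"
    using \<psi> by (simp only: add_eq_0_iff minus_minus)
  finally show ?thesis .
qed

lemma gm11_lowers_Hodge_degree:
  assumes "X \<in> gm11 Qm Hs" "0 < p" "p \<le> 4" "v \<in> Hs p"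
  shows "X *v v \<in> Hs (p - 1)"
  using assms unfolding gm11_def by auto

lemma pol_hodge4_subspace:
  assumes "pol_hodge4 Qm Hs" "p \<le> 4"
  shows "vec.subspace (Hs p)"
proof -
  have "\<forall>p\<le>4. vec.subspace (Hs p)" using assms(1) unfolding pol_hodge4_def by (elim conjE)
  then show ?thesis using assms(2) by blast
qed

lemma pol_hodge4_cconj:
  assumes "pol_hodge4 Qm Hs" "p \<le> 4"
  shows "cconj ` Hs p = Hs (4 - p)"
proof -
  have "\<forall>p\<le>4. cconj ` Hs p = Hs (4 - p)" using assms(1) unfolding pol_hodge4_def by (elim conjE)
  then show ?thesis using assms(2) by blast
qed

lemma pol_hodge4_qf_cconj_nonzero:
  assumes hodge: "pol_hodge4 Qm Hs" and p: "p \<le> 4" and w: "w \<in> Hs p" "w \<noteq> 0"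
  shows "qf Qm w (cconj w) \<noteq> 0"
proof
  assume null: "qf Qm w (cconj w) = 0"
  define ws where "ws = (\<lambda>q::nat. if q = p then w else 0)"
  have "\<forall>q\<le>4. ws q \<in> Hs q"
    using w(1) pol_hodge4_subspace[OF hodge] vec.subspace_0 unfolding ws_def by auto
  moreover have "\<exists>q\<le>4. ws q \<noteq> 0" using p w(2) unfolding ws_def by auto
  ultimately have pos: "Re (qf Qm (\<Sum>q\<le>4. (\<i> powi (int q - int (4 - q))) *s ws q)
                          (cconj (\<Sum>q\<le>4. ws q))) > 0"
    using hodge unfolding pol_hodge4_def Let_def by blast
  define c where "c = \<i> powi (int p - int (4 - p))"
  have weyl: "(\<lambda>q. (\<i> powi (int q - int (4 - q))) *s ws q) = (\<lambda>q. if q = p then c *s w else 0)"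
    unfolding ws_def c_def by auto
  have sums: "(\<Sum>q\<le>4. ws q) = w" "(\<Sum>q\<le>4. if q = p then c *s w else 0) = c *s w"
    using p unfolding ws_def by (simp_all add: sum.delta)
  have "0 < Re (qf Qm (c *s w) (cconj w))" using pos unfolding weyl sums .
  then show False unfolding qf_scale_left null by simp
qed

text \<open>
  The conjugate of \<open>S\<close> is a copy of \<open>span S\<close> inside \<open>H\<^sup>q\<^sup>,\<^sup>p\<close>, and it meets the
  \<open>Q\<close>-orthogonal subspace \<open>V\<close> only in \<open>0\<close> by the Hodge--Riemann relations.
\<close>

lemma pol_hodge4_dim_orthogonal_add_le:
  assumes hodge: "pol_hodge4 Qm Hs" and sym: "transpose Qm = Qm" and pq: "p + q = 4"
    and V: "vec.subspace V" "V \<subseteq> Hs q" and S: "S \<subseteq> Hs p"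
    and orth: "\<And>x y. x \<in> V \<Longrightarrow> y \<in> S \<Longrightarrow> qf Qm x y = 0"
  shows "vec.dim V + vec.dim S \<le> vec.dim (Hs q)"
proof -
  have p: "p \<le> 4" and q: "4 - p = q" using pq by auto
  define W where "W = vec.span (cconj ` S)"
  have Hp: "vec.subspace (Hs p)" and Hq: "vec.subspace (Hs q)"
    using pol_hodge4_subspace[OF hodge] p q by auto
  have "cconj ` S \<subseteq> Hs q" using S pol_hodge4_cconj[OF hodge p] q by blast
  then have "W \<subseteq> Hs q" unfolding W_def by (rule vec.span_minimal[OF _ Hq])
  define U where "U = {x + y |x y. x \<in> V \<and> y \<in> W}"
  have "U \<subseteq> Hs q"
    using V(2) \<open>W \<subseteq> Hs q\<close> unfolding U_def by (auto intro!: vec.subspace_add[OF Hq])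
  then have sum_le: "vec.dim U \<le> vec.dim (Hs q)"
    by (rule vec.dim_subset)
  have "V \<inter> W \<subseteq> {0}"
  proof
    fix x assume x: "x \<in> V \<inter> W"
    have span: "cconj x \<in> vec.span S"
      using cconj_in_span_image[of x "cconj ` S"] x unfolding W_def by (simp add: image_image)
    have "vec.span S \<subseteq> {y. qf Qm x y = 0}"
      using orth x by (intro vec.span_minimal subspace_qf_orthogonal) auto
    then have "qf Qm (cconj x) (cconj (cconj x)) = 0"
      using span qf_commute[OF sym] by auto
    moreover have "cconj x \<in> Hs p" using span vec.span_minimal[OF S Hp] by blast
    ultimately show "x \<in> {0}" using pol_hodge4_qf_cconj_nonzero[OF hodge p] by fastforce
  qed
  then have "vec.dim (V \<inter> W) = 0" by (simp only: vec.dim_eq_0)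
  moreover have "vec.dim W = vec.dim S" unfolding W_def vec.dim_span by (rule dim_cconj_image)
  moreover have "vec.dim U + vec.dim (V \<inter> W) = vec.dim V + vec.dim W"
    unfolding U_def W_def by (rule vec.dim_sums_Int[OF V(1) vec.subspace_span])
  ultimately show ?thesis using sum_le by linarith
qed

theorem proposition5p7:
  fixes Qm :: "complex^'n^'n" and Hs :: "nat \<Rightarrow> (complex^'n) set"
    and E :: "(complex^'n^'n) set" and \<zeta> :: "complex^'n"
  assumes "rational_form Qm"
    and "pol_hodge4 Qm Hs"
    and "integral_element Qm Hs E"
    and "\<zeta> \<in> HR" and "\<zeta> \<in> Hs 2"
  shows "int (mat.dim E) - int (mat.dim (E_zeta E \<zeta>))
           \<le> int (vec.dim (Hs 1)) - int (sigma_zeta Hs E \<zeta>)"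
proof -
  have sym: "transpose Qm = Qm" using assms(1) unfolding rational_form_def by blast
  have E: "mat.subspace E" "E \<subseteq> gm11 Qm Hs" "\<And>\<phi> \<psi>. \<phi> \<in> E \<Longrightarrow> \<psi> \<in> E \<Longrightarrow> \<phi> ** \<psi> = \<psi> ** \<phi>"
    using assms(3) unfolding integral_element_def by auto
  define V where "V = (\<lambda>\<phi>. \<phi> *v \<zeta>) ` E"
  define S where "S = {\<psi> *v \<omega> | \<psi> \<omega>. \<psi> \<in> E_zeta E \<zeta> \<and> \<omega> \<in> Hs 4}"
  have codim: "mat.dim E \<le> mat.dim (E_zeta E \<zeta>) + vec.dim V"
    unfolding V_def E_zeta_def
    by (rule matrix_vector.dim_le_dim_kernel_add_dim_image[OF linear_matrix_vector_mult_left E(1)])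
  have hodge: "vec.dim V + vec.dim S \<le> vec.dim (Hs 1)"
  proof (rule pol_hodge4_dim_orthogonal_add_le[OF assms(2) sym, of 3 1])
    show "vec.subspace V" unfolding V_def
      by (rule matrix_vector.linear_subspace_image[OF linear_matrix_vector_mult_left E(1)])
    show "V \<subseteq> Hs 1"
    proof
      fix x assume "x \<in> V"
      then obtain \<phi> where "\<phi> \<in> E" "x = \<phi> *v \<zeta>" unfolding V_def by blast
      then show "x \<in> Hs 1"
        using E(2) gm11_lowers_Hodge_degree[of \<phi> Qm Hs 2 \<zeta>] assms(5) by auto
    qed
    show "S \<subseteq> Hs 3"
    proof
      fix y assume "y \<in> S"
      then obtain \<psi> \<omega> where "\<psi> \<in> E" "\<omega> \<in> Hs 4" "y = \<psi> *v \<omega>"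
        unfolding S_def E_zeta_def by blast
      then show "y \<in> Hs 3"
        using E(2) gm11_lowers_Hodge_degree[of \<psi> Qm Hs 4 \<omega>] by auto
    qed
    show "qf Qm x y = 0" if x: "x \<in> V" and y: "y \<in> S" for x y
    proof -
      obtain \<phi> \<psi> \<omega> where "x = \<phi> *v \<zeta>" "y = \<psi> *v \<omega>" "\<phi> \<in> E" "\<psi> \<in> E" "\<psi> *v \<zeta> = 0"
        using x y unfolding V_def S_def E_zeta_def by blast
      moreover have "E \<subseteq> gC Qm" using E(2) unfolding gm11_def by blast
      ultimately have "qf Qm x y = qf Qm (\<psi> *v \<zeta>) (\<phi> *v \<omega>)"
        using qf_swap_of_commuting_gC[of \<phi> Qm \<psi> \<zeta> \<omega>] E(3) by blast
      with \<open>\<psi> *v \<zeta> = 0\<close> show ?thesis by simp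
    qed
  qed simp
  have sigma: "sigma_zeta Hs E \<zeta> = vec.dim S"
    unfolding sigma_zeta_def S_def by (rule vec.dim_span)
  show ?thesis using codim hodge sigma by linarith
qed

end
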